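(* Let $m\in\mathbb N$, $\lambda>m/2$, and $\mu_0,\dots,\mu_m>0$. For $0\le j\le m$ and all $z,w\in\mathbb D$, the series $$K_j(z,w):=\sum_{n\ge 0}\mathbf e^j_n(z)\,\mathbf e^j_n(w)^*$$ converges and $$K_j(z,w)=D_j\,\tilde{\mathbf B}^{(\lambda_j)}(z,w)\,D_j .$$ Consequently the reproducing kernel of the Hilbert space $\mathcal H^{(\lambda,\boldsymbol\mu)}$ of $\mathbb C^{m+1}$-valued holomorphic functions on $\mathbb D$ in which $\{\mu_j\mathbf e^j_n: 0\le j\le m,\ n\ge 0\}$ is an orthonormal basis is $$K^{(\lambda,\boldsymbol\mu)}(z,w)=\sum_{j=0}^m\mu_j^2\, D_j\,\tilde{\mathbf B}^{(\lambda_j)}(z,w)\,D_j .$$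
   Context: $\mathbb D$ is the open unit disc. Vectors in $\mathbb C^{m+1}$ and rows/columns of $(m+1)\times(m+1)$ matrices are indexed by $0,\dots,m$. $(x)_n=x(x+1)\cdots(x+n-1)$, $(x)_0=1$; $\binom{n}{k}=0$ if $n<k$. Set $\lambda_j=\lambda-\frac m2+j$. For $0\le j\le m$, $n\ge0$, let $u^j_n$ be the $\mathbb C^{m+1}$-valued polynomial whose $\ell$-th component is $0$ for $\ell<j$ and $\binom{n}{k}(j+1)_k(2\lambda_j+k)_{n-k}z^{n-k}$ for $j\le\ell\le m$, $k=\ell-j$ (equivalently $u^j_n=(-F)^n\varepsilon_j$ with $(-Ff)(z)=(2\lambda-m)zf+2zNf+S_mf+z^2f'$, $N=\mathrm{diag}(0,\dots,m)$, $(S_m)_{\ell,\ell-1}=\ell$). Put $\mathbf e^j_n:=\big((2\lambda_j)_n\, n!\big)^{-1/2}u^j_n$. $\tilde{\mathbf B}^{(\lambda_j)}(z,w)$ is the $(m+1)\times(m+1)$ matrix whose $(\ell,p)$ entry is $\partial_z^{\ell-j}\partial_{\bar w}^{p-j}(1-z\bar w)^{-2\lambda_j}$ for $j\le\ell,p\le m$ and $0$ otherwise. $D_j$ is the diagonal matrix with $(\ell,\ell)$ entry $\frac{(j+1)_{\ell-j}}{(2\lambda_j)_{\ell-j}\,(1)_{\ell-j}}$ for $j\le\ell\le m$ (entries with $\ell<j$ may be taken $0$). *)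

theory Defs
  imports "HOL-Analysis.Analysis"
begin

text \<open>Vectors in C^(m+1) are functions nat => complex (components 0..m),
  (m+1)x(m+1) matrices are functions nat => nat => complex (entries 0..m).\<close>

definition lamj :: "nat \<Rightarrow> real \<Rightarrow> nat \<Rightarrow> real" where
  "lamj m lam j = lam - real m / 2 + real j"

definition uvec :: "nat \<Rightarrow> real \<Rightarrow> nat \<Rightarrow> nat \<Rightarrow> complex \<Rightarrow> nat \<Rightarrow> complex" where
  "uvec m lam j n z l =
     (if j \<le> l \<and> l \<le> m then
        of_nat (n choose (l - j)) * pochhammer (of_nat (j + 1)) (l - j)
        * pochhammer (complex_of_real (2 * lamj m lam j) + of_nat (l - j)) (n - (l - j))
        * z ^ (n - (l - j))
      else 0)"

definition evec :: "nat \<Rightarrow> real \<Rightarrow> nat \<Rightarrow> nat \<Rightarrow> complex \<Rightarrow> nat \<Rightarrow> complex" where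
  "evec m lam j n z l =
     complex_of_real (1 / sqrt (pochhammer (2 * lamj m lam j) n * fact n)) * uvec m lam j n z l"

definition Btilde :: "nat \<Rightarrow> real \<Rightarrow> nat \<Rightarrow> complex \<Rightarrow> complex \<Rightarrow> nat \<Rightarrow> nat \<Rightarrow> complex" where
  "Btilde m lam j z w l p =
     (if j \<le> l \<and> l \<le> m \<and> j \<le> p \<and> p \<le> m then
        (deriv ^^ (l - j))
          (\<lambda>z'. (deriv ^^ (p - j))
                   (\<lambda>v. (1 - z' * v) powr (- complex_of_real (2 * lamj m lam j))) (cnj w)) z
      else 0)"

definition Dmat :: "nat \<Rightarrow> real \<Rightarrow> nat \<Rightarrow> nat \<Rightarrow> nat \<Rightarrow> complex" where
  "Dmat m lam j l p =
     (if l = p \<and> j \<le> l \<and> l \<le> m then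
        complex_of_real (pochhammer (real (j + 1)) (l - j)
          / (pochhammer (2 * lamj m lam j) (l - j) * pochhammer 1 (l - j)))
      else 0)"

definition mmult :: "nat \<Rightarrow> (nat \<Rightarrow> nat \<Rightarrow> complex) \<Rightarrow> (nat \<Rightarrow> nat \<Rightarrow> complex) \<Rightarrow> nat \<Rightarrow> nat \<Rightarrow> complex" where
  "mmult m A B l p = (\<Sum>q\<le>m. A l q * B q p)"

end

theory Submission
  imports Defs
begin

text \<open>With \<open>a = 2\<lambda>\<^sub>j\<close>, the binomial series \<open>(1 - z v) powr (-a) = \<Sum>\<^sub>n (a)\<^sub>n / n! z\<^sup>n v\<^sup>n\<close>
  converges for \<open>|z|, |v| < 1\<close>. Differentiating it termwise \<open>l - j\<close> times in \<open>z\<close> and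
  \<open>p - j\<close> times in \<open>v\<close> and setting \<open>v = conj w\<close> gives a series whose \<open>n\<close>-th term is
  the \<open>(l, p)\<close> entry of \<open>e\<^sup>j\<^sub>n(z) e\<^sup>j\<^sub>n(w)\<^sup>*\<close> divided by \<open>(D\<^sub>j)\<^sub>l\<^sub>l (D\<^sub>j)\<^sub>p\<^sub>p\<close>, because the
  \<open>l\<close>-th component of \<open>e\<^sup>j\<^sub>n(z)\<close> is \<open>(D\<^sub>j)\<^sub>l\<^sub>l sqrt ((a)\<^sub>n / n!) n! / (n - l + j)! z\<^sup>n\<^sup>-\<^sup>l\<^sup>+\<^sup>j\<close>.
  Derived power series converge absolutely inside the disc, so the sum over the whole
  basis \<open>\<mu>\<^sub>j e\<^sup>j\<^sub>n\<close> can be taken unconditionally.\<close>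

definition falling_fact :: "nat \<Rightarrow> nat \<Rightarrow> complex" where
  "falling_fact n k = (if k \<le> n then fact n / fact (n - k) else 0)"

lemma diffs_funpow: "(diffs ^^ q) b n = b (n + q) * falling_fact (n + q) q"
proof (induction q arbitrary: n)
  case 0
  then show ?case by (simp add: falling_fact_def)
next
  case (Suc q)
  have "of_nat (Suc n) * falling_fact (Suc n + q) q = falling_fact (n + Suc q) (Suc q)"
    unfolding falling_fact_def by (simp add: fact_Suc[of n] del: of_nat_Suc fact_Suc)
  moreover have "(diffs ^^ Suc q) b n = of_nat (Suc n) * (diffs ^^ q) b (Suc n)"
    by (simp add: diffs_def)
  ultimately show ?case
    using Suc by (simp add: mult_ac)
qed

lemma sums_higher_deriv_powser_diffs:
  fixes f :: "complex \<Rightarrow> complex"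
  assumes f: "\<And>v. norm v < r \<Longrightarrow> (\<lambda>n. b n * v ^ n) sums f v" and v: "norm v < r"
  shows "(\<lambda>n. (diffs ^^ q) b n * v ^ n) sums (deriv ^^ q) f v"
  using v
proof (induction q arbitrary: v)
  case 0
  then show ?case using f by simp
next
  case (Suc q)
  define c where "c = (diffs ^^ q) b"
  have summable_c: "\<And>x. norm x < r \<Longrightarrow> summable (\<lambda>n. c n * x ^ n)"
    using Suc.IH c_def sums_summable by blast
  have "\<And>x. x \<in> ball 0 r \<Longrightarrow> (\<Sum>n. c n * x ^ n) = (deriv ^^ q) f x"
    using Suc.IH c_def sums_unique by (metis dist_0_norm mem_ball)
  then have "((deriv ^^ q) f has_field_derivative (\<Sum>n. diffs c n * v ^ n)) (at v)"
    by (intro has_field_derivative_transform_within_open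
          [OF termdiffs_strong'[OF summable_c Suc.prems], of "ball 0 r"])
       (use Suc.prems in auto)
  then have "(deriv ^^ Suc q) f v = (\<Sum>n. diffs c n * v ^ n)"
    by (simp add: DERIV_imp_deriv)
  moreover have "summable (\<lambda>n. diffs c n * v ^ n)"
    by (rule termdiff_converges[OF Suc.prems summable_c])
  ultimately show ?case
    unfolding c_def by (simp add: summable_sums)
qed

lemma sums_higher_deriv_powser:
  fixes f :: "complex \<Rightarrow> complex"
  assumes f: "\<And>v. norm v < r \<Longrightarrow> (\<lambda>n. b n * v ^ n) sums f v" and v: "norm v < r"
  shows "(\<lambda>n. b n * falling_fact n q * v ^ (n - q)) sums (deriv ^^ q) f v"
proof -
  have zero: "\<And>n. n < q \<Longrightarrow> b n * falling_fact n q * v ^ (n - q) = 0"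
    by (simp add: falling_fact_def)
  have "(\<lambda>n. b (n + q) * falling_fact (n + q) q * v ^ (n + q - q)) sums (deriv ^^ q) f v"
    using sums_higher_deriv_powser_diffs[OF f v, of q] by (simp add: diffs_funpow)
  then show ?thesis
    using sums_zero_iff_shift[of q "\<lambda>n. b n * falling_fact n q * v ^ (n - q)", OF zero] by simp
qed

lemma summable_norm_higher_deriv_powser:
  fixes f :: "complex \<Rightarrow> complex"
  assumes f: "\<And>v. norm v < r \<Longrightarrow> (\<lambda>n. b n * v ^ n) sums f v" and v: "norm v < r"
  shows "summable (\<lambda>n. norm (b n * falling_fact n q * v ^ (n - q)))"
proof -
  obtain s where s: "norm v < s" "s < r"
    using v dense by blast
  moreover have "0 \<le> s"
    using s(1) norm_ge_zero[of v] by linarith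
  ultimately have "norm (complex_of_real s) < r"
    by simp
  then have "summable (\<lambda>n. (diffs ^^ q) b n * complex_of_real s ^ n)"
    using sums_higher_deriv_powser_diffs[OF f] sums_summable by blast
  then have "summable (\<lambda>n. norm ((diffs ^^ q) b n * v ^ n))"
    by (rule powser_insidea) (use s in auto)
  then show ?thesis
    using summable_iff_shift[of "\<lambda>n. norm (b n * falling_fact n q * v ^ (n - q))" q]
    by (simp add: diffs_funpow)
qed

lemma binomial_series_pochhammer:
  fixes A x :: complex
  assumes "norm x < 1"
  shows "(\<lambda>n. pochhammer A n / fact n * x ^ n) sums (1 - x) powr (- A)"
proof -
  have "(- A gchoose n) * (- x) ^ n = pochhammer A n / fact n * x ^ n" for n
  proof -
    have "(- A gchoose n) * (- x) ^ n = ((-1) ^ n * (-1) ^ n) * (pochhammer A n / fact n) * x ^ n"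
      by (simp add: gbinomial_pochhammer power_minus[of x] field_simps)
    also have "(-1 :: complex) ^ n * (-1) ^ n = 1"
      by (simp add: power_mult_distrib[symmetric])
    finally show ?thesis by simp
  qed
  moreover have "(\<lambda>n. (- A gchoose n) * (- x) ^ n) sums (1 + - x) powr (- A)"
    by (rule gen_binomial_complex) (use assms in simp)
  ultimately show ?thesis by simp
qed

lemma sums_higher_deriv_binomial_kernel:
  fixes A z v :: complex
  assumes z: "norm z < 1" and v: "norm v < 1"
  shows "(\<lambda>n. (pochhammer A n / fact n * falling_fact n q * v ^ (n - q)) * z ^ n)
           sums (deriv ^^ q) (\<lambda>v'. (1 - z * v') powr (- A)) v"
proof -
  have "(\<lambda>n. (pochhammer A n / fact n * z ^ n) * v' ^ n) sums (1 - z * v') powr (- A)"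
    if "norm v' < 1" for v'
  proof -
    have "norm z * norm v' \<le> norm z"
      using that by (simp add: mult_left_le)
    then have "norm (z * v') < 1"
      using z by (simp add: norm_mult)
    from binomial_series_pochhammer[OF this, of A] show ?thesis
      by (simp add: power_mult_distrib mult_ac)
  qed
  from sums_higher_deriv_powser[OF this v, of q] show ?thesis
    by (simp add: mult_ac)
qed

lemma mmult_diagonal_sandwich:
  assumes D: "\<And>l p. l \<noteq> p \<Longrightarrow> D l p = 0" and "l \<le> m" "p \<le> m"
  shows "mmult m (mmult m D X) D l p = D l l * X l p * D p p"
proof -
  have left: "mmult m D X l r = D l l * X l r" for r
  proof -
    have "mmult m D X l r = (\<Sum>q\<le>m. if q = l then D l l * X l r else 0)"
      unfolding mmult_def by (rule sum.cong) (auto simp: D)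
    then show ?thesis using assms by simp
  qed
  have "mmult m (mmult m D X) D l p = (\<Sum>r\<le>m. if r = p then D l l * X l p * D p p else 0)"
    unfolding mmult_def[of m "mmult m D X"] left by (rule sum.cong) (auto simp: D)
  then show ?thesis using assms by simp
qed

lemma binomial_mult_pochhammer_shift:
  fixes a :: real
  assumes "a > 0" "k \<le> n"
  shows "real (n choose k) * pochhammer (a + real k) (n - k)
       = pochhammer a n / (pochhammer a k * fact k) * (fact n / fact (n - k))"
proof -
  have "pochhammer a n = pochhammer a k * pochhammer (a + real k) (n - k)"
    using assms(2) pochhammer_product by auto
  moreover have "pochhammer a k > 0"
    using assms(1) by (simp add: pochhammer_pos)
  ultimately show ?thesis
    using assms(2) by (simp add: binomial_fact field_simps)
qed

lemma binomial_pochhammer_div_sqrt: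
  fixes a c :: real
  assumes "a > 0" "k \<le> n"
  shows "c * real (n choose k) * pochhammer (a + real k) (n - k) / sqrt (pochhammer a n * fact n)
       = c / (pochhammer a k * fact k) * sqrt (pochhammer a n / fact n) * (fact n / fact (n - k))"
proof -
  have "pochhammer a n > 0"
    using assms(1) by (simp add: pochhammer_pos)
  then have root: "pochhammer a n / sqrt (pochhammer a n * fact n) = sqrt (pochhammer a n / fact n)"
    by (simp add: real_sqrt_mult real_sqrt_divide real_div_sqrt flip: divide_divide_eq_left)
  have "c * real (n choose k) * pochhammer (a + real k) (n - k) / sqrt (pochhammer a n * fact n)
      = c / (pochhammer a k * fact k) * (pochhammer a n / sqrt (pochhammer a n * fact n))
          * (fact n / fact (n - k))"
    unfolding mult.assoc binomial_mult_pochhammer_shift[OF assms] by simp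
  then show ?thesis
    unfolding root .
qed

lemma evec_eq_Dmat:
  assumes a_pos: "2 * lamj m lam j > 0" and "j \<le> l" "l \<le> m"
  shows "evec m lam j n z l = Dmat m lam j l l
           * of_real (sqrt (pochhammer (2 * lamj m lam j) n / fact n))
           * falling_fact n (l - j) * z ^ (n - (l - j))"
proof (cases "l - j \<le> n")
  case False
  then show ?thesis
    by (simp add: evec_def uvec_def falling_fact_def)
next
  case True
  define a where "a = 2 * lamj m lam j"
  define k where "k = l - j"
  have "a > 0" "k \<le> n"
    using a_pos True by (simp_all add: a_def k_def)
  have "pochhammer (of_nat (j + 1)) k = complex_of_real (pochhammer (real (j + 1)) k)"
    by (metis of_real_of_nat_eq pochhammer_of_real)
  moreover have "pochhammer (complex_of_real a + of_nat k) (n - k)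
      = of_real (pochhammer (a + real k) (n - k))"
    by (metis of_real_add of_real_of_nat_eq pochhammer_of_real)
  ultimately have "evec m lam j n z l = of_real (pochhammer (real (j + 1)) k * real (n choose k)
        * pochhammer (a + real k) (n - k) / sqrt (pochhammer a n * fact n)) * z ^ (n - k)"
    using assms(2,3) by (simp add: evec_def uvec_def a_def k_def mult_ac)
  also have "\<dots> = Dmat m lam j l l * of_real (sqrt (pochhammer a n / fact n))
      * falling_fact n k * z ^ (n - k)"
    unfolding binomial_pochhammer_div_sqrt[OF \<open>a > 0\<close> \<open>k \<le> n\<close>]
    using assms(2,3) \<open>k \<le> n\<close> by (simp add: Dmat_def falling_fact_def a_def k_def flip: pochhammer_fact)
  finally show ?thesis
    unfolding a_def k_def .
qed

lemma evec_mult_cnj_evec: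
  assumes a_pos: "2 * lamj m lam j > 0" and "j \<le> l" "l \<le> m" "j \<le> p" "p \<le> m"
  shows "evec m lam j n z l * cnj (evec m lam j n w p)
       = Dmat m lam j l l
         * (pochhammer (of_real (2 * lamj m lam j)) n / fact n
            * falling_fact n (p - j) * cnj w ^ (n - (p - j))
            * falling_fact n (l - j) * z ^ (n - (l - j)))
         * Dmat m lam j p p"
proof -
  define a where "a = 2 * lamj m lam j"
  define s where "s = complex_of_real (sqrt (pochhammer a n / fact n))"
  have "pochhammer a n > 0"
    using a_pos by (simp add: a_def pochhammer_pos)
  then have "sqrt (pochhammer a n / fact n) * sqrt (pochhammer a n / fact n) = pochhammer a n / fact n"
    by simp
  then have s_square: "s * s = pochhammer (of_real a) n / fact n"
    unfolding s_def by (simp flip: of_real_mult add: pochhammer_of_real)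
  have "cnj (Dmat m lam j p p) = Dmat m lam j p p" "cnj (falling_fact n (p - j)) = falling_fact n (p - j)"
    by (simp_all add: Dmat_def falling_fact_def)
  then have "evec m lam j n z l * cnj (evec m lam j n w p)
      = Dmat m lam j l l * (s * s * falling_fact n (p - j) * cnj w ^ (n - (p - j))
          * falling_fact n (l - j) * z ^ (n - (l - j))) * Dmat m lam j p p"
    unfolding evec_eq_Dmat[OF a_pos assms(2,3)] evec_eq_Dmat[OF a_pos assms(4,5)] s_def a_def
    by (simp add: mult_ac)
  then show ?thesis
    unfolding s_square a_def .
qed

lemma evec_kernel_sums:
  assumes a_pos: "2 * lamj m lam j > 0" and z: "norm z < 1" and w: "norm w < 1"
    and "l \<le> m" "p \<le> m"
  shows "(\<lambda>n. evec m lam j n z l * cnj (evec m lam j n w p)) sums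
           mmult m (mmult m (Dmat m lam j) (Btilde m lam j z w)) (Dmat m lam j) l p" (is ?sums)
    and "summable (\<lambda>n. norm (evec m lam j n z l * cnj (evec m lam j n w p)))" (is ?summable)
proof -
  have sandwich: "mmult m (mmult m (Dmat m lam j) (Btilde m lam j z w)) (Dmat m lam j) l p
      = Dmat m lam j l l * Btilde m lam j z w l p * Dmat m lam j p p"
    by (rule mmult_diagonal_sandwich) (simp_all add: Dmat_def assms(4,5))
  have "?sums \<and> ?summable"
  proof (cases "j \<le> l \<and> j \<le> p")
    case False
    then have zero: "\<And>n. evec m lam j n z l * cnj (evec m lam j n w p) = 0"
      by (auto simp: evec_def uvec_def)
    have "mmult m (mmult m (Dmat m lam j) (Btilde m lam j z w)) (Dmat m lam j) l p = 0"
      using False by (auto simp: sandwich Dmat_def)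
    then show ?thesis
      unfolding zero by simp
  next
    case True
    define A where "A = complex_of_real (2 * lamj m lam j)"
    define k where "k = l - j"
    define q where "q = p - j"
    define c where "c n = pochhammer A n / fact n * falling_fact n q * cnj w ^ (n - q)" for n
    define G where "G z' = (deriv ^^ q) (\<lambda>v. (1 - z' * v) powr (- A)) (cnj w)" for z'
    have G: "\<And>z'. norm z' < 1 \<Longrightarrow> (\<lambda>n. c n * z' ^ n) sums G z'"
      unfolding c_def G_def using w by (intro sums_higher_deriv_binomial_kernel) auto
    have summand: "evec m lam j n z l * cnj (evec m lam j n w p)
        = Dmat m lam j l l * (c n * falling_fact n k * z ^ (n - k)) * Dmat m lam j p p" for n
      unfolding c_def A_def k_def q_def
      using evec_mult_cnj_evec[OF a_pos] True assms(4,5) by (simp add: mult.assoc)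
    have Btilde_eq: "Btilde m lam j z w l p = (deriv ^^ k) G z"
      unfolding Btilde_def G_def k_def q_def A_def using True assms(4,5) by simp
    have ?sums
      unfolding summand sandwich Btilde_eq
      by (intro sums_mult sums_mult2 sums_higher_deriv_powser[OF G z])
    moreover have "summable (\<lambda>n. norm (Dmat m lam j l l) * norm (c n * falling_fact n k * z ^ (n - k))
        * norm (Dmat m lam j p p))"
      by (intro summable_mult summable_mult2 summable_norm_higher_deriv_powser[OF G z])
    ultimately show ?thesis
      unfolding summand by (simp add: norm_mult)
  qed
  then show ?sums and ?summable
    by auto
qed

lemma has_sum_Times_UNIV_finite:
  fixes f :: "'a \<times> 'b \<Rightarrow> 'c::topological_comm_monoid_add"
  assumes "finite J" and "\<And>j. j \<in> J \<Longrightarrow> ((\<lambda>n. f (j, n)) has_sum s j) UNIV"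
  shows "(f has_sum (\<Sum>j\<in>J. s j)) (J \<times> UNIV)"
proof -
  have "(f has_sum s j) ({j} \<times> UNIV)" if "j \<in> J" for j
  proof -
    have "(f has_sum s j) ((\<lambda>n. (j, n)) ` UNIV)"
      by (subst has_sum_reindex) (use assms(2) that in \<open>auto simp: inj_on_def o_def\<close>)
    moreover have "(\<lambda>n. (j, n)) ` UNIV = {j} \<times> (UNIV :: 'b set)" by auto
    ultimately show ?thesis by simp
  qed
  then have "(f has_sum (\<Sum>j\<in>J. s j)) (\<Union>j\<in>J. {j} \<times> UNIV)"
    by (intro sum_has_sum \<open>finite J\<close>) auto
  moreover have "(\<Union>j\<in>J. {j} \<times> UNIV) = J \<times> (UNIV :: 'b set)" by auto
  ultimately show ?thesis by simp
qed

theorem theorem5p1: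
  fixes m :: nat and lam :: real and mu :: "nat \<Rightarrow> real"
  assumes hlam: "lam > real m / 2"
    and hmu: "\<forall>j\<le>m. mu j > 0"
  shows "(\<forall>j\<le>m. \<forall>z w. norm z < 1 \<longrightarrow> norm w < 1 \<longrightarrow>
            (\<forall>l\<le>m. \<forall>p\<le>m.
              (\<lambda>n. evec m lam j n z l * cnj (evec m lam j n w p)) sums
                mmult m (mmult m (Dmat m lam j) (Btilde m lam j z w)) (Dmat m lam j) l p))
       \<and> (\<forall>z w. norm z < 1 \<longrightarrow> norm w < 1 \<longrightarrow>
            (\<forall>l\<le>m. \<forall>p\<le>m.
              ((\<lambda>(j, n). (complex_of_real (mu j) * evec m lam j n z l)
                          * cnj (complex_of_real (mu j) * evec m lam j n w p))
               has_sum
                 (\<Sum>j\<le>m. complex_of_real ((mu j)\<^sup>2)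
                    * mmult m (mmult m (Dmat m lam j) (Btilde m lam j z w)) (Dmat m lam j) l p))
              ({..m} \<times> (UNIV :: nat set))))"
proof -
  have a_pos: "2 * lamj m lam j > 0" for j
    using hlam by (simp add: lamj_def)
  have weighted: "((\<lambda>n. (complex_of_real (mu j) * evec m lam j n z l)
                  * cnj (complex_of_real (mu j) * evec m lam j n w p))
      has_sum (complex_of_real ((mu j)\<^sup>2)
        * mmult m (mmult m (Dmat m lam j) (Btilde m lam j z w)) (Dmat m lam j) l p)) UNIV"
    if "norm z < 1" "norm w < 1" "l \<le> m" "p \<le> m" for j z w l p
  proof -
    have "((\<lambda>n. evec m lam j n z l * cnj (evec m lam j n w p)) has_sum
        mmult m (mmult m (Dmat m lam j) (Btilde m lam j z w)) (Dmat m lam j) l p) UNIV"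
      using evec_kernel_sums[OF a_pos that] by (rule norm_summable_imp_has_sum[rotated])
    from has_sum_cmult_right[OF this, of "complex_of_real ((mu j)\<^sup>2)"] show ?thesis
      by (simp add: power2_eq_square mult_ac)
  qed
  show ?thesis
    using evec_kernel_sums(1)[OF a_pos] weighted by (auto intro!: has_sum_Times_UNIV_finite)
qed

end
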